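(* Let $\theta$ be a complex Garsia number whose minimal polynomial has constant term $\pm2$, let $\lambda=1/\theta$, and for $n\ge1$ let $\mathcal A_\lambda^{(n)}=\{\sum_{k=0}^{n-1}a_k\lambda^k: a_k\in\{-1,1\}\}$. Then (a) $\#\mathcal A_\lambda^{(n)}=2^n$ for all $n\ge1$; and (b) there exists $c>0$ such that for all $n\ge1$ and all distinct $x,y\in\mathcal A_\lambda^{(n)}$, $|x-y|\ge c\cdot 2^{-n/2}$.
   Context: An algebraic integer $\theta$ with $|\theta|>1$ is a Garsia number if all its Galois conjugates have modulus greater than one; a complex Garsia number is a non-real Garsia number. *)

theory Defs
  imports "HOL-Analysis.Analysis" "HOL-Computational_Algebra.Computational_Algebra"
begin

(* p is the minimal polynomial of the algebraic integer theta:
   a monic integer polynomial, irreducible in Z[x] (equivalently over Q, since monic),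
   having theta as a root. *)
definition is_int_min_poly :: "int poly \<Rightarrow> complex \<Rightarrow> bool" where
  "is_int_min_poly p \<theta> \<longleftrightarrow>
     lead_coeff p = 1 \<and> irreducible p \<and> poly (map_poly of_int p) \<theta> = 0"

(* Galois conjugates of theta: the complex roots of its minimal polynomial *)
definition garsia_number :: "complex \<Rightarrow> bool" where
  "garsia_number \<theta> \<longleftrightarrow> cmod \<theta> > 1 \<and>
     (\<exists>p. is_int_min_poly p \<theta> \<and>
          (\<forall>z. poly (map_poly of_int p) z = 0 \<longrightarrow> cmod z > 1))"

definition complex_garsia_number :: "complex \<Rightarrow> bool" where
  "complex_garsia_number \<theta> \<longleftrightarrow> garsia_number \<theta> \<and> Im \<theta> \<noteq> 0"

definition digit_set :: "complex \<Rightarrow> nat \<Rightarrow> complex set" where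
  "digit_set lam n = {z. \<exists>a :: nat \<Rightarrow> complex. (\<forall>k<n. a k \<in> {-1, 1}) \<and> z = (\<Sum>k<n. a k * lam ^ k)}"

end

theory Submission
  imports Defs "Berlekamp_Zassenhaus.Factorize_Int_Poly" "Jordan_Normal_Form.Determinant"
begin

text \<open>A difference of two points of the digit set is \<open>2 B(\<lambda>)\<close> for an integer polynomial \<open>B\<close>
  with coefficients in \<open>{-1, 0, 1}\<close> and degree at most \<open>n\<close>. Let \<open>Q(x) = x\<^sup>d B(1/x)\<close>, \<open>d = deg B\<close>, be
  the reversed polynomial. If \<open>B \<noteq> 0\<close>, the constant term of \<open>Q\<close> is the odd number \<open>lead_coeff B\<close>,
  so \<open>Q\<close> is not a multiple of the minimal polynomial \<open>p\<close>, whose constant term is \<open>\<plusminus>2\<close>; hence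
  \<open>B(\<lambda>) \<noteq> 0\<close>, which gives (a). For (b), the norm \<open>N = \<Prod>\<^sub>\<alpha> Q(\<alpha>)\<close> over the conjugates \<open>\<alpha>\<close> of
  \<open>\<theta>\<close> is then a nonzero rational integer, and
  \<open>|N| = 2\<^sup>d |B(\<lambda>)|\<^sup>2 \<Prod>\<^sub>\<alpha> |B(1/\<alpha>)|\<close>, the last product over the conjugates other than \<open>\<theta>\<close>
  and \<open>cnj \<theta>\<close>. As all conjugates lie outside the unit disc, \<open>|B(1/\<alpha>)| \<le> 1/(1 - 1/|\<alpha>|)\<close>, so
  \<open>1 \<le> |N|\<close> yields \<open>|B(\<lambda>)|\<^sup>2 \<ge> c 2\<^sup>-\<^sup>n\<close>.\<close>

section \<open>Minimal polynomials over the integers\<close>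

lemma irreducible_rat_of_int_poly:
  fixes p :: "int poly"
  assumes monic: "lead_coeff p = 1" and irr: "irreducible p"
  shows "irreducible (of_int_poly p :: rat poly)"
proof -
  have "degree p \<noteq> 0"
  proof
    assume "degree p = 0"
    then have "p = 1" using monic by (metis degree_0_id one_pCons)
    then show False using irr by simp
  qed
  then have "irreducible\<^sub>d p"
    using irr irreducible_imp_primitive irreducible_primitive_connect by blast
  then have "irreducible\<^sub>d (of_int_poly p :: rat poly)" by (rule irreducible\<^sub>d_int_rat)
  then show ?thesis by simp
qed

lemma of_rat_of_int_poly [simp]:
  "map_poly (of_rat :: rat \<Rightarrow> 'a :: field_char_0) (of_int_poly p) = of_int_poly p"
  by (simp add: map_poly_map_poly o_def)

lemma irreducible_monic_int_poly_dvd: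
  fixes p q :: "int poly" and z :: "'a :: field_char_0"
  assumes monic: "lead_coeff p = 1" and irr: "irreducible p"
    and p_z: "poly (of_int_poly p) z = 0" and q_z: "poly (of_int_poly q) z = 0"
  shows "p dvd q"
proof -
  let ?rp = "of_int_poly p :: rat poly" and ?rq = "of_int_poly q :: rat poly"
  interpret of_rat_poly: map_poly_comm_ring_hom "of_rat :: rat \<Rightarrow> 'a" ..
  have "?rp dvd ?rq"
  proof (rule ccontr)
    assume "\<not> ?rp dvd ?rq"
    moreover have "prime_elem ?rp"
      using irreducible_rat_of_int_poly[OF monic irr] by (rule field_poly_irreducible_imp_prime)
    ultimately have "gcd ?rp ?rq = 1" by (simp add: prime_elem_imp_coprime)
    then obtain u v where "u * ?rp + v * ?rq = 1"
      using bezout_coefficients_fst_snd by metis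
    then have "poly (map_poly of_rat (u * ?rp + v * ?rq)) z = 1" by simp
    then show False using p_z q_z by (simp add: of_rat_poly.hom_add of_rat_poly.hom_mult)
  qed
  moreover have "content p = 1"
    using content_dvd_coeff[of p "degree p"] monic by simp
  ultimately show ?thesis by (simp add: dvd_poly_int_content_1)
qed

lemma poly_of_int_poly_eq_0_dvd:
  fixes p q :: "int poly" and z :: "'a :: comm_ring_1"
  assumes "p dvd q" "poly (of_int_poly p) z = 0"
  shows "poly (of_int_poly q) z = 0"
  using assms by (auto simp: of_int_poly_hom.hom_mult)

lemma poly_conjugate_root_int_poly:
  fixes p q :: "int poly" and a b :: "'a :: field_char_0"
  assumes "lead_coeff p = 1" "irreducible p" "poly (of_int_poly p) a = 0" "poly (of_int_poly p) b = 0"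
    and "poly (of_int_poly q) a = 0"
  shows "poly (of_int_poly q) b = 0"
  using irreducible_monic_int_poly_dvd[OF assms(1-3,5)] assms(4) by (rule poly_of_int_poly_eq_0_dvd)

lemma irreducible_monic_int_poly_distinct_roots:
  fixes p :: "int poly"
  assumes monic: "lead_coeff p = 1" and irr: "irreducible p"
  obtains as :: "complex list" where "distinct as" "length as = degree p"
    "of_int_poly p = (\<Prod>a\<leftarrow>as. [:-a, 1:])" "set as = {z. poly (of_int_poly p) z = 0}"
proof -
  let ?pc = "of_int_poly p :: complex poly"
  have "square_free (of_int_poly p :: rat poly)"
    using irreducible_rat_of_int_poly[OF monic irr] by (rule irreducible_imp_square_free)
  moreover have "field_hom_0' (of_rat :: rat \<Rightarrow> complex)" ..
  ultimately have "rsquarefree ?pc"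
    by (metis field_hom_0'.square_free_map_poly of_rat_of_int_poly square_free_rsquarefree)
  obtain as where "Polynomial.smult (lead_coeff ?pc) (\<Prod>a\<leftarrow>as. [:-a, 1:]) = ?pc" "length as = degree ?pc"
    using fundamental_theorem_algebra_factorized by blast
  then have as: "?pc = (\<Prod>a\<leftarrow>as. [:-a, 1:])" "length as = degree p" using monic by simp_all
  have roots: "set as = {z. poly ?pc z = 0}"
    unfolding as(1) poly_prod_list prod_list_zero_iff by auto
  have "card (set as) = length as"
    using rsquarefree_card_degree[of ?pc] \<open>rsquarefree ?pc\<close> monic roots as(2)
    by (cases "p = 0") auto
  then have "distinct as" by (simp add: card_distinct)
  with as roots show ?thesis using that by blast
qed

section \<open>Norms of algebraic integers\<close>

lemma poly_eq_sum_lessThan: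
  fixes f :: "'a :: comm_semiring_1 poly"
  assumes "\<And>k. n \<le> k \<Longrightarrow> coeff f k = 0"
  shows "poly f x = (\<Sum>k<n. coeff f k * x ^ k)"
proof (cases "f = 0")
  case False
  then have "degree f < n" using assms leading_coeff_0_iff not_less by blast
  have "poly f x = (\<Sum>k\<le>degree f. coeff f k * x ^ k)" by (rule poly_altdef)
  also have "\<dots> = (\<Sum>k<n. coeff f k * x ^ k)"
    using \<open>degree f < n\<close> by (intro sum.mono_neutral_left) (auto simp: coeff_eq_0)
  finally show ?thesis .
qed simp

lemma poly_pseudo_mod_monic_root:
  fixes p f :: "int poly" and a :: "'a :: comm_ring_1"
  assumes "lead_coeff p = 1" "poly (of_int_poly p) a = 0"
  shows "poly (of_int_poly (pseudo_mod f p)) a = poly (of_int_poly f) a"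
proof -
  have "p \<noteq> 0" using assms(1) by auto
  from pseudo_divmod[OF this surjective_pairing, of f] assms(1)
  have "f = p * fst (pseudo_divmod f p) + pseudo_mod f p" by (simp add: pseudo_mod_def)
  from arg_cong[OF this, of "\<lambda>g. poly (of_int_poly g) a"] show ?thesis
    using assms(2) by (simp add: of_int_poly_hom.hom_mult of_int_poly_hom.hom_add)
qed

lemma det_diagonal_mat:
  fixes xs :: "'a :: comm_ring_1 list"
  shows "det (mat (length xs) (length xs) (\<lambda>(i, j). if i = j then xs ! i else 0)) = prod_list xs"
proof -
  let ?D = "mat (length xs) (length xs) (\<lambda>(i, j). if i = j then xs ! i else 0)"
  have "det ?D = prod_list (diag_mat ?D)"
    by (rule det_upper_triangular) (auto simp: upper_triangular_def)
  also have "diag_mat ?D = xs"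
    unfolding diag_mat_def by (auto intro!: nth_equalityI)
  finally show ?thesis .
qed

lemma det_vandermonde_nonzero:
  fixes as :: "'a :: field list"
  assumes "distinct as"
  shows "det (mat (length as) (length as) (\<lambda>(i, k). as ! i ^ k)) \<noteq> 0"
proof
  define d where "d = length as"
  let ?V = "mat d d (\<lambda>(i, k). as ! i ^ k) :: 'a mat"
  assume "det (mat (length as) (length as) (\<lambda>(i, k). as ! i ^ k)) = 0"
  then obtain v where v: "v \<in> carrier_vec d" "v \<noteq> 0\<^sub>v d" "?V *\<^sub>v v = 0\<^sub>v d"
    using det_0_iff_vec_prod_zero[of ?V d] unfolding d_def by auto
  define w where "w = (\<Sum>k<d. monom (vec_index v k) k)"
  have coeff_w: "coeff w k = (if k < d then vec_index v k else 0)" for k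
    unfolding w_def by (simp add: coeff_sum)
  have poly_w: "poly w t = (\<Sum>k<d. vec_index v k * t ^ k)" for t
    unfolding w_def by (simp add: poly_sum poly_monom)
  obtain k0 where "k0 < d" "vec_index v k0 \<noteq> 0"
    using v(1,2) by (metis carrier_vecD eq_vecI index_zero_vec(1,2))
  then have "w \<noteq> 0" using coeff_w[of k0] by auto
  have "degree w < d"
    using \<open>k0 < d\<close> coeff_w by (intro degree_lessI) auto
  have "set as \<subseteq> {x. poly w x = 0}"
  proof
    fix t assume "t \<in> set as"
    then obtain i where i: "i < d" "as ! i = t" by (auto simp: d_def in_set_conv_nth)
    have "(\<Sum>k<d. as ! i ^ k * vec_index v k) = vec_index (?V *\<^sub>v v) i"
      using i v(1) by (simp add: scalar_prod_def lessThan_atLeast0 row_def)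
    also have "\<dots> = 0" using v(3) i by simp
    finally show "t \<in> {x. poly w x = 0}"
      using i by (simp add: poly_w mult.commute)
  qed
  then have "card (set as) \<le> card {x. poly w x = 0}"
    by (rule card_mono[OF poly_roots_finite[OF \<open>w \<noteq> 0\<close>]])
  also have "\<dots> \<le> degree w" by (rule card_poly_roots_bound[OF \<open>w \<noteq> 0\<close>])
  finally show False
    using assms \<open>degree w < d\<close> by (simp add: distinct_card d_def)
qed

text \<open>With \<open>r\<^sub>j\<close> the remainder of \<open>x\<^sup>j q\<close> modulo \<open>p\<close>, the integer matrix \<open>(coeff r\<^sub>j k)\<close>
  represents multiplication by \<open>q\<close> on \<open>\<int>[x]/(p)\<close>; the Vandermonde matrix of the roots
  conjugates it to the diagonal matrix of the values \<open>q(\<alpha>)\<close>, so their product is its determinant.\<close>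

lemma prod_list_poly_roots_Ints:
  fixes p q :: "int poly" and as :: "'a :: field_char_0 list"
  assumes monic: "lead_coeff p = 1" and "distinct as" and len: "length as = degree p"
    and roots: "\<And>a. a \<in> set as \<Longrightarrow> poly (of_int_poly p) a = 0"
  shows "(\<Prod>a\<leftarrow>as. poly (of_int_poly q) a) \<in> \<int>"
proof -
  have "p \<noteq> 0" using monic by auto
  define d where "d = degree p"
  define r where "r j = pseudo_mod (monom 1 j * q) p" for j
  define qs where "qs = map (\<lambda>a. poly (of_int_poly q) a) as"
  define V where "V = (mat d d (\<lambda>(i, k). as ! i ^ k) :: 'a mat)"
  define B where "B = (mat d d (\<lambda>(k, j). coeff (r j) k) :: int mat)"
  define D where "D = mat d d (\<lambda>(i, j). if i = j then qs ! i else 0)"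
  have V: "V \<in> carrier_mat d d" and B: "map_mat of_int B \<in> carrier_mat d d"
    and D: "D \<in> carrier_mat d d"
    unfolding V_def B_def D_def by auto
  have "V * map_mat of_int B = D * V"
  proof (rule eq_matI)
    fix i j assume "i < dim_row (D * V)" "j < dim_col (D * V)"
    then have i: "i < d" and j: "j < d" using V D by auto
    then have root: "poly (of_int_poly p) (as ! i) = 0" using len d_def roots by simp
    have "coeff (r j) k = 0" if "d \<le> k" for k
      using pseudo_mod(2)[of p "monom 1 j * q", OF \<open>p \<noteq> 0\<close>] that unfolding r_def d_def
      by (metis coeff_0 coeff_eq_0 order.strict_trans2)
    then have "(V * map_mat of_int B) $$ (i, j) = poly (of_int_poly (r j)) (as ! i)"
      using i j poly_eq_sum_lessThan[of d "of_int_poly (r j)" "as ! i"] unfolding V_def B_def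
      by (simp add: scalar_prod_def lessThan_atLeast0 row_def col_def mult.commute)
    also have "\<dots> = as ! i ^ j * qs ! i"
      using poly_pseudo_mod_monic_root[OF monic root] i len
      by (simp add: r_def qs_def d_def of_int_poly_hom.hom_mult poly_monom)
    also have "\<dots> = (D * V) $$ (i, j)"
      using i j unfolding V_def D_def
      by (simp add: scalar_prod_def row_def col_def if_distrib[of "\<lambda>x. x * _"] cong: if_cong)
    finally show "(V * map_mat of_int B) $$ (i, j) = (D * V) $$ (i, j)" .
  qed (use V B D in auto)
  then have "det V * det (map_mat of_int B) = det D * det V"
    using det_mult[OF V B] det_mult[OF D V] by metis
  moreover have "det V \<noteq> 0"
    using det_vandermonde_nonzero[OF \<open>distinct as\<close>] unfolding V_def d_def len by simp
  moreover have "det D = (\<Prod>a\<leftarrow>as. poly (of_int_poly q) a)"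
    using det_diagonal_mat[of qs] len unfolding D_def qs_def d_def by simp
  ultimately show ?thesis by (metis Ints_of_int of_int_hom.hom_det mult.commute mult_left_cancel)
qed

lemma prod_roots_poly_Ints:
  fixes p q :: "int poly"
  assumes "lead_coeff p = 1" "irreducible p"
  shows "(\<Prod>a \<in> {z::complex. poly (of_int_poly p) z = 0}. poly (of_int_poly q) a) \<in> \<int>"
proof -
  obtain as :: "complex list" where "distinct as" "length as = degree p"
    "of_int_poly p = (\<Prod>a\<leftarrow>as. [:-a, 1:])" and roots: "set as = {z. poly (of_int_poly p) z = 0}"
    by (rule irreducible_monic_int_poly_distinct_roots[OF assms])
  have "(\<Prod>a\<leftarrow>as. poly (of_int_poly q) a) \<in> \<int>"
    by (rule prod_list_poly_roots_Ints[OF assms(1) \<open>distinct as\<close> \<open>length as = degree p\<close>])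
      (use roots in auto)
  then show ?thesis
    using \<open>distinct as\<close> by (simp add: roots[symmetric] prod.distinct_set_conv_list)
qed

lemma norm_prod_roots_int_poly:
  fixes p :: "int poly"
  assumes "lead_coeff p = 1" "irreducible p"
  shows "cmod (\<Prod>a \<in> {z::complex. poly (of_int_poly p) z = 0}. a) = \<bar>coeff p 0\<bar>"
proof -
  obtain as :: "complex list" where "distinct as" "length as = degree p"
    and factor: "of_int_poly p = (\<Prod>a\<leftarrow>as. [:-a, 1:])"
    and roots: "set as = {z. poly (of_int_poly p) z = 0}"
    by (rule irreducible_monic_int_poly_distinct_roots[OF assms])
  have "(\<Prod>a\<in>set as. - a) = (\<Prod>a\<leftarrow>as. - a)"
    using \<open>distinct as\<close> by (simp add: prod.distinct_set_conv_list)
  also have "\<dots> = poly (of_int_poly p) 0" unfolding factor poly_prod_list by (simp add: o_def)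
  also have "\<dots> = of_int (coeff p 0)" by (simp add: poly_0_coeff_0)
  finally have "cmod (\<Prod>a\<in>set as. - a) = \<bar>coeff p 0\<bar>" by simp
  moreover have "cmod (\<Prod>a\<in>set as. - a) = cmod (\<Prod>a\<in>set as. a)"
    unfolding prod_norm[symmetric] by simp
  ultimately show ?thesis by (simp add: roots)
qed

section \<open>Lower bound at the inverse of a complex Garsia number\<close>

lemma poly_of_int_reflect_poly:
  fixes B :: "int poly" and z :: "'a :: field_char_0"
  assumes "z \<noteq> 0"
  shows "poly (of_int_poly (reflect_poly B)) z = z ^ degree B * poly (of_int_poly B) (1 / z)"
proof -
  have "of_int_poly (reflect_poly B) = (reflect_poly (of_int_poly B) :: 'a poly)"
    by (rule poly_eqI) (simp add: coeff_reflect_poly)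
  then show ?thesis using assms by (simp add: poly_reflect_poly_nz inverse_eq_divide)
qed

lemma norm_poly_le_geometric:
  fixes P :: "'a :: real_normed_field poly"
  assumes coeffs: "\<And>k. norm (coeff P k) \<le> 1" and "norm z < 1"
  shows "norm (poly P z) \<le> 1 / (1 - norm z)"
proof -
  have "norm (poly P z) \<le> (\<Sum>k<Suc (degree P). norm (coeff P k * z ^ k))"
    unfolding poly_altdef lessThan_Suc_atMost by (rule norm_sum)
  also have "\<dots> \<le> (\<Sum>k<Suc (degree P). norm z ^ k)"
    using coeffs by (intro sum_mono) (simp add: norm_mult norm_power mult_left_le_one_le)
  also have "\<dots> = (1 - norm z ^ Suc (degree P)) / (1 - norm z)"
    using \<open>norm z < 1\<close> by (simp only: sum_gp_strict) simp
  also have "\<dots> \<le> 1 / (1 - norm z)"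
    using \<open>norm z < 1\<close> by (intro divide_right_mono) auto
  finally show ?thesis .
qed

lemma prod_conjugate_pair:
  fixes f :: "complex \<Rightarrow> real"
  assumes "finite S" "\<theta> \<in> S" "cnj \<theta> \<in> S" "Im \<theta> \<noteq> 0" "f (cnj \<theta>) = f \<theta>"
  shows "(\<Prod>a\<in>S. f a) = f \<theta> ^ 2 * (\<Prod>a\<in>S - {\<theta>, cnj \<theta>}. f a)"
proof -
  have "cnj \<theta> \<noteq> \<theta>" using assms(4) by (simp add: complex_eq_iff)
  have "(\<Prod>a\<in>S. f a) = (\<Prod>a\<in>insert \<theta> (insert (cnj \<theta>) (S - {\<theta>, cnj \<theta>})). f a)"
    using assms(2,3) by (intro prod.cong) auto
  also have "\<dots> = f \<theta> * (f (cnj \<theta>) * (\<Prod>a\<in>S - {\<theta>, cnj \<theta>}. f a))"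
    using assms(1) \<open>cnj \<theta> \<noteq> \<theta>\<close> by simp
  finally show ?thesis using assms(5) by (simp add: power2_eq_square)
qed

lemma norm_prod_reflect_poly_roots:
  fixes p B :: "int poly"
  assumes "lead_coeff p = 1" "irreducible p" "coeff p 0 \<noteq> 0"
  shows "cmod (\<Prod>a \<in> {z. poly (of_int_poly p) z = 0}. poly (of_int_poly (reflect_poly B)) a)
    = \<bar>coeff p 0\<bar> ^ degree B * (\<Prod>a \<in> {z. poly (of_int_poly p) z = 0}. cmod (poly (of_int_poly B) (1 / a)))"
proof -
  let ?S = "{z::complex. poly (of_int_poly p) z = 0}"
  have "a \<noteq> 0" if "a \<in> ?S" for a
    using that assms(3) by (auto simp: poly_0_coeff_0)
  then have "(\<Prod>a\<in>?S. poly (of_int_poly (reflect_poly B)) a)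
      = (\<Prod>a\<in>?S. a) ^ degree B * (\<Prod>a\<in>?S. poly (of_int_poly B) (1 / a))"
    by (simp add: poly_of_int_reflect_poly prod.distrib prod_power_distrib)
  then show ?thesis
    using norm_prod_roots_int_poly[OF assms(1,2)] by (simp add: norm_mult norm_power flip: prod_norm)
qed

lemma poly_inverse_root_nonzero:
  fixes p B :: "int poly" and \<theta> :: complex
  assumes "lead_coeff p = 1" "irreducible p" "poly (of_int_poly p) \<theta> = 0" "\<theta> \<noteq> 0"
    and "\<not> coeff p 0 dvd lead_coeff B"
  shows "poly (of_int_poly B) (1 / \<theta>) \<noteq> 0"
proof
  assume "poly (of_int_poly B) (1 / \<theta>) = 0"
  then have "poly (of_int_poly (reflect_poly B)) \<theta> = 0"
    using \<open>\<theta> \<noteq> 0\<close> by (simp add: poly_of_int_reflect_poly)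
  then have "p dvd reflect_poly B"
    by (rule irreducible_monic_int_poly_dvd[OF assms(1-3)])
  then obtain s where "reflect_poly B = p * s" by (elim dvdE)
  then have "lead_coeff B = coeff p 0 * coeff s 0"
    by (metis coeff_0_reflect_poly coeff_mult_0)
  then show False using assms(5) by simp
qed

lemma prod_norm_poly_inverse_le:
  fixes B :: "int poly" and T :: "complex set"
  assumes "\<forall>k. \<bar>coeff B k\<bar> \<le> 1" and "\<And>a. a \<in> T \<Longrightarrow> 1 < cmod a"
  shows "(\<Prod>a\<in>T. cmod (poly (of_int_poly B) (1 / a))) \<le> (\<Prod>a\<in>T. 1 / (1 - 1 / cmod a))"
proof (rule prod_mono)
  fix a assume "a \<in> T"
  then have "1 / cmod a < 1" using assms(2) by (simp add: divide_less_eq)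
  moreover have "\<bar>real_of_int (coeff B k)\<bar> \<le> 1" for k
    using assms(1) by (simp flip: of_int_abs)
  ultimately show "0 \<le> cmod (poly (of_int_poly B) (1 / a)) \<and>
      cmod (poly (of_int_poly B) (1 / a)) \<le> 1 / (1 - 1 / cmod a)"
    using norm_poly_le_geometric[of "of_int_poly B" "1 / a"] by (simp add: norm_divide)
qed

lemma norm_poly_inverse_root_lower_bound:
  fixes p :: "int poly" and \<theta> :: complex
  assumes monic: "lead_coeff p = 1" and irr: "irreducible p" and root: "poly (of_int_poly p) \<theta> = 0"
    and nonreal: "Im \<theta> \<noteq> 0" and expanding: "\<And>z. poly (of_int_poly p) z = 0 \<Longrightarrow> 1 < cmod z"
  shows "\<exists>C>0. \<forall>B. (\<forall>k. \<bar>coeff B k\<bar> \<le> 1) \<longrightarrow> poly (of_int_poly B) (1 / \<theta>) \<noteq> 0 \<longrightarrow>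
           C / \<bar>coeff p 0\<bar> ^ degree B \<le> (cmod (poly (of_int_poly B) (1 / \<theta>)))\<^sup>2"
proof -
  define S where "S = {z::complex. poly (of_int_poly p) z = 0}"
  define K where "K = (\<Prod>a\<in>S - {\<theta>, cnj \<theta>}. 1 / (1 - 1 / cmod a))"
  have "finite S" unfolding S_def using monic by (intro poly_roots_finite) auto
  have "\<theta> \<in> S" "cnj \<theta> \<in> S"
    using root real_poly_cnj_root_iff[of "of_int_poly p" \<theta>] unfolding S_def by auto
  have "0 \<notin> S" using expanding[of 0] unfolding S_def by auto
  then have "coeff p 0 \<noteq> 0" unfolding S_def by (simp add: poly_0_coeff_0)
  have "\<theta> \<noteq> 0" using \<open>0 \<notin> S\<close> \<open>\<theta> \<in> S\<close> by auto
  have "0 < 1 / (1 - 1 / cmod a)" if "a \<in> S" for a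
    using expanding[of a] that unfolding S_def by (simp add: divide_less_eq)
  then have "0 < K" unfolding K_def by (intro prod_pos) auto
  have "1 / K / \<bar>coeff p 0\<bar> ^ degree B \<le> (cmod (poly (of_int_poly B) (1 / \<theta>)))\<^sup>2"
    if coeffs: "\<forall>k. \<bar>coeff B k\<bar> \<le> 1" and nonzero: "poly (of_int_poly B) (1 / \<theta>) \<noteq> 0" for B
  proof -
    define R where "R a = cmod (poly (of_int_poly B) (1 / a))" for a
    define N where "N = (\<Prod>a\<in>S. poly (of_int_poly (reflect_poly B)) a)"
    have "poly (of_int_poly (reflect_poly B)) \<theta> \<noteq> 0"
      using nonzero \<open>\<theta> \<noteq> 0\<close> by (simp add: poly_of_int_reflect_poly)
    then have "poly (of_int_poly (reflect_poly B)) a \<noteq> 0" if "a \<in> S" for a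
      using poly_conjugate_root_int_poly[OF monic irr _ root] that unfolding S_def by blast
    then have "N \<noteq> 0" using \<open>finite S\<close> unfolding N_def by simp
    moreover have "N \<in> \<int>" unfolding N_def S_def by (rule prod_roots_poly_Ints[OF monic irr])
    ultimately have "1 \<le> cmod N" by (auto elim!: Ints_cases)
    also have "cmod N = \<bar>coeff p 0\<bar> ^ degree B * (\<Prod>a\<in>S. R a)"
      unfolding N_def R_def S_def by (rule norm_prod_reflect_poly_roots[OF monic irr \<open>coeff p 0 \<noteq> 0\<close>])
    also have "(\<Prod>a\<in>S. R a) = R \<theta> ^ 2 * (\<Prod>a\<in>S - {\<theta>, cnj \<theta>}. R a)"
    proof (rule prod_conjugate_pair[OF \<open>finite S\<close> \<open>\<theta> \<in> S\<close> \<open>cnj \<theta> \<in> S\<close> nonreal])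
      have "poly (of_int_poly B) (1 / cnj \<theta>) = cnj (poly (of_int_poly B) (1 / \<theta>))"
        by (simp add: poly_cnj map_poly_map_poly o_def)
      then show "R (cnj \<theta>) = R \<theta>" unfolding R_def by simp
    qed
    finally have "1 \<le> \<bar>coeff p 0\<bar> ^ degree B * (R \<theta> ^ 2 * (\<Prod>a\<in>S - {\<theta>, cnj \<theta>}. R a))" .
    also have "\<dots> \<le> \<bar>coeff p 0\<bar> ^ degree B * (R \<theta> ^ 2 * K)"
      using prod_norm_poly_inverse_le[OF coeffs, of "S - {\<theta>, cnj \<theta>}"] expanding
      unfolding K_def R_def S_def by (intro mult_left_mono) auto
    finally show ?thesis
      using \<open>0 < K\<close> \<open>coeff p 0 \<noteq> 0\<close> by (simp add: R_def divide_le_eq mult_ac)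
  qed
  then show ?thesis using \<open>0 < K\<close> by (intro exI[of _ "1 / K"]) auto
qed

lemma digit_sum_difference_poly:
  fixes a a' :: "nat \<Rightarrow> complex"
  assumes "\<forall>k<n. a k \<in> {-1, 1}" "\<forall>k<n. a' k \<in> {-1, 1}"
  obtains B :: "int poly" where "\<And>k. \<bar>coeff B k\<bar> \<le> 1" "degree B \<le> n"
    "B = 0 \<longleftrightarrow> (\<forall>k<n. a k = a' k)"
    "(\<Sum>k<n. a k * l ^ k) - (\<Sum>k<n. a' k * l ^ k) = 2 * poly (of_int_poly B) l"
proof
  define b where "b k = (if a k = a' k then 0 else if a k = 1 then 1 else -1 :: int)" for k
  define B where "B = (\<Sum>k<n. monom (b k) k)"
  have coeff_B: "coeff B k = (if k < n then b k else 0)" for k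
    unfolding B_def by (simp add: coeff_sum coeff_monom)
  have b_eq_0_iff: "b k = 0 \<longleftrightarrow> a k = a' k" for k
    by (simp add: b_def)
  show "\<bar>coeff B k\<bar> \<le> 1" for k by (simp add: coeff_B b_def)
  show "degree B \<le> n" by (rule degree_le) (simp add: coeff_B)
  show "B = 0 \<longleftrightarrow> (\<forall>k<n. a k = a' k)"
    unfolding poly_eq_iff coeff_B by (simp add: b_eq_0_iff)
  have diff: "a k - a' k = 2 * of_int (b k)" if "k < n" for k
  proof -
    have "a k = -1 \<or> a k = 1" "a' k = -1 \<or> a' k = 1" using assms that by auto
    then show ?thesis by (auto simp: b_def)
  qed
  have "(\<Sum>k<n. a k * l ^ k) - (\<Sum>k<n. a' k * l ^ k) = (\<Sum>k<n. (a k - a' k) * l ^ k)"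
    by (simp add: left_diff_distrib sum_subtractf)
  also have "\<dots> = 2 * (\<Sum>k<n. of_int (b k) * l ^ k)"
    by (simp add: diff sum_distrib_left mult.assoc)
  also have "(\<Sum>k<n. of_int (b k) * l ^ k) = poly (of_int_poly B) l"
    using poly_eq_sum_lessThan[of n "of_int_poly B" l] by (simp add: coeff_B)
  finally show "(\<Sum>k<n. a k * l ^ k) - (\<Sum>k<n. a' k * l ^ k) = 2 * poly (of_int_poly B) l" .
qed

lemma digit_set_eq_image:
  "digit_set l n = (\<lambda>a. \<Sum>k<n. a k * l ^ k) ` (\<Pi>\<^sub>E k\<in>{..<n}. {-1, 1})"
proof (intro equalityI subsetI)
  fix z assume "z \<in> digit_set l n"
  then obtain a where "\<forall>k<n. a k \<in> {-1, 1}" "z = (\<Sum>k<n. a k * l ^ k)"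
    unfolding digit_set_def by blast
  then have "restrict a {..<n} \<in> (\<Pi>\<^sub>E k\<in>{..<n}. {-1, 1})" "z = (\<Sum>k<n. restrict a {..<n} k * l ^ k)"
    by auto
  then show "z \<in> (\<lambda>a. \<Sum>k<n. a k * l ^ k) ` (\<Pi>\<^sub>E k\<in>{..<n}. {-1, 1})" by blast
qed (auto simp: digit_set_def)

lemma card_digit_set:
  assumes "\<And>B. B \<noteq> 0 \<Longrightarrow> \<forall>k. \<bar>coeff B k\<bar> \<le> 1 \<Longrightarrow> poly (of_int_poly B) l \<noteq> 0"
  shows "card (digit_set l n) = 2 ^ n"
proof -
  have "inj_on (\<lambda>a. \<Sum>k<n. a k * l ^ k) (\<Pi>\<^sub>E k\<in>{..<n}. {-1, 1})"
  proof (rule inj_onI)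
    fix a a' assume a: "a \<in> (\<Pi>\<^sub>E k\<in>{..<n}. {-1, 1})" and a': "a' \<in> (\<Pi>\<^sub>E k\<in>{..<n}. {-1, 1})"
      and "(\<Sum>k<n. a k * l ^ k) = (\<Sum>k<n. a' k * l ^ k)"
    have "\<forall>k<n. a k \<in> {-1, 1}" "\<forall>k<n. a' k \<in> {-1, 1}" using a a' by auto
    then obtain B :: "int poly" where "\<And>k. \<bar>coeff B k\<bar> \<le> 1" "degree B \<le> n"
      "B = 0 \<longleftrightarrow> (\<forall>k<n. a k = a' k)"
      "(\<Sum>k<n. a k * l ^ k) - (\<Sum>k<n. a' k * l ^ k) = 2 * poly (of_int_poly B) l"
      using digit_sum_difference_poly[of n a a' l] by blast
    then show "a = a'" using assms \<open>(\<Sum>k<n. a k * l ^ k) = (\<Sum>k<n. a' k * l ^ k)\<close>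
      by (intro PiE_ext[OF a a']) auto
  qed
  then have "card (digit_set l n) = card (\<Pi>\<^sub>E k\<in>{..<n}. {-1, 1::complex})"
    by (simp add: digit_set_eq_image card_image)
  also have "\<dots> = 2 ^ n" by (simp add: card_PiE numeral_2_eq_2)
  finally show ?thesis .
qed

lemma digit_set_separation:
  fixes l :: complex and C :: real
  assumes "0 < C"
    and bound: "\<And>B. \<forall>k. \<bar>coeff B k\<bar> \<le> 1 \<Longrightarrow> poly (of_int_poly B) l \<noteq> 0 \<Longrightarrow>
                  C / 2 ^ degree B \<le> (cmod (poly (of_int_poly B) l))\<^sup>2"
    and "x \<in> digit_set l n" "y \<in> digit_set l n" "x \<noteq> y"
  shows "2 * sqrt C * 2 powr (- real n / 2) \<le> cmod (x - y)"
proof -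
  obtain a a' where "\<forall>k<n. a k \<in> {-1, 1}" "x = (\<Sum>k<n. a k * l ^ k)"
    "\<forall>k<n. a' k \<in> {-1, 1}" "y = (\<Sum>k<n. a' k * l ^ k)"
    using \<open>x \<in> digit_set l n\<close> \<open>y \<in> digit_set l n\<close> unfolding digit_set_def by blast
  then obtain B :: "int poly" where coeffs: "\<forall>k. \<bar>coeff B k\<bar> \<le> 1" and "degree B \<le> n"
    and diff: "x - y = 2 * poly (of_int_poly B) l"
    using digit_sum_difference_poly[of n a a' l] by metis
  have "poly (of_int_poly B) l \<noteq> 0" using diff \<open>x \<noteq> y\<close> by auto
  have "C / 2 ^ n \<le> C / 2 ^ degree B"
    using \<open>0 < C\<close> \<open>degree B \<le> n\<close> by (intro divide_left_mono) auto
  also have "\<dots> \<le> (cmod (poly (of_int_poly B) l))\<^sup>2"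
    using bound coeffs \<open>poly (of_int_poly B) l \<noteq> 0\<close> by blast
  finally have "sqrt (C / 2 ^ n) \<le> cmod (poly (of_int_poly B) l)"
    by (intro real_le_lsqrt) auto
  moreover have "sqrt (C / 2 ^ n) = sqrt C * 2 powr (- real n / 2)"
  proof -
    have "sqrt (2 ^ n) = (2::real) powr (real n / 2)"
      by (simp add: powr_half_sqrt_powr powr_realpow)
    then show ?thesis by (simp add: real_sqrt_divide powr_minus_divide)
  qed
  ultimately show ?thesis using diff by (simp add: norm_mult)
qed

theorem mainTheorem10:
  fixes \<theta> :: complex and p :: "int poly"
  assumes "complex_garsia_number \<theta>"
    and "is_int_min_poly p \<theta>"
    and "coeff p 0 = 2 \<or> coeff p 0 = -2"
  shows "(\<forall>n\<ge>1. card (digit_set (1 / \<theta>) n) = 2 ^ n) \<and>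
         (\<exists>c>0. \<forall>n\<ge>1. \<forall>x\<in>digit_set (1 / \<theta>) n. \<forall>y\<in>digit_set (1 / \<theta>) n.
              x \<noteq> y \<longrightarrow> cmod (x - y) \<ge> c * 2 powr (- real n / 2))"
proof -
  have monic: "lead_coeff p = 1" and irr: "irreducible p" and root: "poly (of_int_poly p) \<theta> = 0"
    using assms(2) unfolding is_int_min_poly_def by auto
  obtain p' where "is_int_min_poly p' \<theta>" and p'_expanding: "\<forall>z. poly (of_int_poly p') z = 0 \<longrightarrow> 1 < cmod z"
    and "Im \<theta> \<noteq> 0" "1 < cmod \<theta>"
    using assms(1) unfolding complex_garsia_number_def garsia_number_def by blast
  then have "p dvd p'"
    using irreducible_monic_int_poly_dvd[OF monic irr root] unfolding is_int_min_poly_def by blast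
  then have expanding: "1 < cmod z" if "poly (of_int_poly p) z = 0" for z
    using p'_expanding poly_of_int_poly_eq_0_dvd that by blast
  obtain C where "0 < C" and bound: "\<And>B. \<forall>k. \<bar>coeff B k\<bar> \<le> 1 \<Longrightarrow> poly (of_int_poly B) (1 / \<theta>) \<noteq> 0 \<Longrightarrow>
      C / 2 ^ degree B \<le> (cmod (poly (of_int_poly B) (1 / \<theta>)))\<^sup>2"
    using norm_poly_inverse_root_lower_bound[OF monic irr root \<open>Im \<theta> \<noteq> 0\<close> expanding] assms(3) by auto
  have nonzero: "poly (of_int_poly B) (1 / \<theta>) \<noteq> 0" if "B \<noteq> 0" "\<forall>k. \<bar>coeff B k\<bar> \<le> 1" for B
  proof (rule poly_inverse_root_nonzero[OF monic irr root])
    show "\<theta> \<noteq> 0" using \<open>1 < cmod \<theta>\<close> by auto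
    have "lead_coeff B \<noteq> 0" "\<bar>lead_coeff B\<bar> \<le> 1" using that by auto
    then have "\<not> 2 dvd lead_coeff B" by presburger
    then show "\<not> coeff p 0 dvd lead_coeff B" using assms(3) by auto
  qed
  have "2 * sqrt C * 2 powr (- real n / 2) \<le> cmod (x - y)"
    if "x \<in> digit_set (1 / \<theta>) n" "y \<in> digit_set (1 / \<theta>) n" "x \<noteq> y" for n x y
    by (rule digit_set_separation[OF \<open>0 < C\<close> bound that])
  then show ?thesis
    using card_digit_set[OF nonzero] \<open>0 < C\<close> by (intro conjI exI[of _ "2 * sqrt C"]) auto
qed

end
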